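(* Let $q\ge5$ and let $\mu\in\mathbb F_q^*\setminus\{1\}$ if $q$ is even or $q\equiv0\pmod3$, and $\mu\in\mathbb F_q^*\setminus\{1,1/9\}$ if $q$ is odd and $q\not\equiv0\pmod3$. The number of $\overline{1_{\mathcal C}}$-planes containing the line $\ell_\mu$ equals $\widetilde N_1(\mu)$ if $\mu$ is a square in $\mathbb F_q$, and $\widetilde N_1(\mu)+1$ otherwise.
   Context: In $\mathrm{PG}(3,q)$ with points $\mathbf P(x_0,x_1,x_2,x_3)$, the twisted cubic is $\mathcal C=\{\mathbf P(t^3,t^2,t,1):t\in\mathbb F_q\}\cup\{\mathbf P(1,0,0,0)\}$. Its osculating planes ($\Gamma$-planes) are $x_0-3tx_1+3t^2x_2-t^3x_3=0$ for $t\in\mathbb F_q$ and $x_3=0$. A $\overline{1_{\mathcal C}}$-plane is a plane which is not a $\Gamma$-plane and contains exactly one point of $\mathcal C$. $\ell_\mu$ is the line through $\mathbf P(0,\mu,0,1)$ and $\mathbf P(1,0,1,0)$. $\widetilde N_1(\mu)$ is the number of $c\in\mathbb F_q^*$ such that $t^3+ct^2-t-\mu c=0$ has exactly one solution $t\in\mathbb F_q$. *)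

theory Defs
  imports Main
begin

type_synonym 'a vec4 = "'a \<times> 'a \<times> 'a \<times> 'a"

definition smult4 :: "'a::field \<Rightarrow> 'a vec4 \<Rightarrow> 'a vec4" where
  "smult4 c v = (case v of (x0,x1,x2,x3) \<Rightarrow> (c*x0, c*x1, c*x2, c*x3))"

definition add4 :: "'a::field vec4 \<Rightarrow> 'a vec4 \<Rightarrow> 'a vec4" where
  "add4 v w = (case v of (x0,x1,x2,x3) \<Rightarrow> case w of (y0,y1,y2,y3) \<Rightarrow>
      (x0+y0, x1+y1, x2+y2, x3+y3))"

definition dot4 :: "'a::field vec4 \<Rightarrow> 'a vec4 \<Rightarrow> 'a" where
  "dot4 v w = (case v of (x0,x1,x2,x3) \<Rightarrow> case w of (y0,y1,y2,y3) \<Rightarrow>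
      x0*y0 + x1*y1 + x2*y2 + x3*y3)"

definition proj :: "'a::field vec4 \<Rightarrow> 'a vec4 set" where
  "proj v = {smult4 c v | c. c \<noteq> 0}"

text \<open>Points of PG(3,q); planes are represented by their (dual) coordinate classes.\<close>
definition PG3_points :: "'a::field vec4 set set" where
  "PG3_points = {proj v | v. v \<noteq> (0,0,0,0)}"

definition PG3_planes :: "'a::field vec4 set set" where
  "PG3_planes = {proj a | a. a \<noteq> (0,0,0,0)}"

definition incident :: "'a::field vec4 set \<Rightarrow> 'a vec4 set \<Rightarrow> bool" where
  "incident H P \<longleftrightarrow> (\<exists>a\<in>H. \<exists>x\<in>P. dot4 a x = 0)"

definition points_of_plane :: "'a::field vec4 set \<Rightarrow> 'a vec4 set set" where
  "points_of_plane H = {P \<in> PG3_points. incident H P}"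

definition line_through :: "'a::field vec4 \<Rightarrow> 'a vec4 \<Rightarrow> 'a vec4 set set" where
  "line_through u w = {proj (add4 (smult4 a u) (smult4 b w)) | a b. (a, b) \<noteq> (0, 0)}"

definition twisted_cubic :: "'a::field vec4 set set" where
  "twisted_cubic = {proj (t^3, t^2, t, 1) | t. True} \<union> {proj (1,0,0,0)}"

definition Gamma_planes :: "'a::field vec4 set set" where
  "Gamma_planes = {proj (1, -3*t, 3*t^2, -(t^3)) | t. True} \<union> {proj (0,0,0,1)}"

definition one_C_bar_plane :: "'a::field vec4 set \<Rightarrow> bool" where
  "one_C_bar_plane H \<longleftrightarrow> H \<in> PG3_planes \<and> H \<notin> Gamma_planes \<and>
     card {P \<in> twisted_cubic. incident H P} = 1"

definition ell :: "'a::field \<Rightarrow> 'a vec4 set set" where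
  "ell \<mu> = line_through (0, \<mu>, 0, 1) (1, 0, 1, 0)"

definition N1_tilde :: "'a::{field,finite} \<Rightarrow> nat" where
  "N1_tilde \<mu> = card {c. c \<noteq> 0 \<and>
      card {t. t^3 + c*t^2 - t - \<mu>*c = 0} = 1}"

end

theory Submission
  imports Defs "HOL-Computational_Algebra.Primes"
begin

text \<open>
  A plane through \<open>\<ell>\<^sub>\<mu>\<close> has coordinates \<open>(a\<^sub>0, a\<^sub>1, -a\<^sub>0, -\<mu> a\<^sub>1)\<close>, so these planes are
  \<open>(1, c, -1, -\<mu> c)\<close> for \<open>c \<in> \<bbbF>\<^sub>q\<close> and the single plane \<open>(0, 1, 0, -\<mu>)\<close>. The former meets
  \<open>\<C>\<close> exactly in the points \<open>P(t\<^sup>3, t\<^sup>2, t, 1)\<close> with \<open>t\<^sup>3 + c t\<^sup>2 - t - \<mu> c = 0\<close>; for \<open>c = 0\<close>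
  there are at least the two roots \<open>0, 1\<close>, which is why \<open>c \<noteq> 0\<close> may be dropped from \<open>N\<^sub>1(\<mu>)\<close>.
  The latter meets \<open>\<C>\<close> in \<open>P(1, 0, 0, 0)\<close> and in the points with \<open>t\<^sup>2 = \<mu>\<close>, so it counts
  exactly when \<open>\<mu>\<close> is a non-square. No \<open>\<Gamma>\<close>-plane contains \<open>\<ell>\<^sub>\<mu>\<close>, as that forces \<open>9 \<mu> = 1\<close>:
  this is excluded by hypothesis in characteristic \<open>\<noteq> 2, 3\<close>, means \<open>\<mu> = 1\<close> in characteristic 2
  and is impossible in characteristic 3. The characteristic is read off from \<open>q\<close>: if a prime
  \<open>p\<close> is nonzero in \<open>\<bbbF>\<^sub>q\<close>, then \<open>x \<mapsto> -x\<close> (for \<open>p = 2\<close>) resp. \<open>(x, y) \<mapsto> (y, -x - y)\<close> (for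
  \<open>p = 3\<close>) permutes the nonzero elements of \<open>\<bbbF>\<^sub>q\<close> resp. \<open>\<bbbF>\<^sub>q\<^sup>2\<close> in orbits of length \<open>p\<close>,
  so \<open>p\<close> divides \<open>q - 1\<close> resp. \<open>q\<^sup>2 - 1\<close>.
\<close>

lemma funpow_mult_fixpoint:
  assumes "(f ^^ n) x = x"
  shows "(f ^^ (n * m)) x = x"
  by (induction m) (simp_all add: funpow_add assms)

lemma funpow_prime_period_minimal:
  assumes "prime p" "(f ^^ p) x = x" "f x \<noteq> x" "0 < k" "k < p"
  shows "(f ^^ k) x \<noteq> x"
proof
  assume fix_k: "(f ^^ k) x = x"
  have "\<not> p dvd k" using assms(4,5) by (simp add: nat_dvd_not_less)
  then have "coprime k p" using assms(1) by (metis prime_imp_coprime coprime_commute)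
  then obtain a b where bezout: "k * a = p * b + 1"
    using bezout_nat[of k p] assms(4) by auto
  have "x = (f ^^ (k * a)) x" using funpow_mult_fixpoint[OF fix_k] by simp
  also have "\<dots> = f ((f ^^ (p * b)) x)" by (simp add: bezout)
  also have "\<dots> = f x" using funpow_mult_fixpoint[OF assms(2)] by simp
  finally show False using assms(3) by simp
qed

lemma card_funpow_prime_orbit:
  assumes "prime p" "(f ^^ p) x = x" "f x \<noteq> x"
  shows "card ((\<lambda>i. (f ^^ i) x) ` {..<p}) = p"
proof -
  have "inj_on (\<lambda>i. (f ^^ i) x) {..<p}"
  proof (rule linorder_inj_onI')
    fix i j assume "i \<in> {..<p}" "j \<in> {..<p}" "i < j"
    show "(f ^^ i) x \<noteq> (f ^^ j) x"
    proof
      assume "(f ^^ i) x = (f ^^ j) x"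
      then have "(f ^^ (p - j + i)) x = (f ^^ (p - j + j)) x" by (simp add: funpow_add)
      also have "\<dots> = x" using \<open>j \<in> {..<p}\<close> assms(2) by simp
      finally have "(f ^^ (p - j + i)) x = x" .
      moreover have "0 < p - j + i" "p - j + i < p" using \<open>i < j\<close> \<open>j \<in> {..<p}\<close> by auto
      ultimately show False using funpow_prime_period_minimal[OF assms] by simp
    qed
  qed
  then show ?thesis by (simp add: card_image)
qed

lemma prime_dvd_card_if_fixpoint_free_periodic:
  assumes "prime p" "finite A" "f ` A \<subseteq> A"
    and period: "\<And>x. x \<in> A \<Longrightarrow> (f ^^ p) x = x"
    and no_fix: "\<And>x. x \<in> A \<Longrightarrow> f x \<noteq> x"
  shows "p dvd card A"
proof -
  define orb where "orb x = (\<lambda>i. (f ^^ i) x) ` {..<p}" for x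
  have p_pos: "p > 0" using assms(1) prime_gt_0_nat by blast
  have funpow_in: "(f ^^ i) x \<in> A" if "x \<in> A" for x i
    using that assms(3) by (induction i) auto
  have card_orb: "card (orb x) = p" if "x \<in> A" for x
    unfolding orb_def by (rule card_funpow_prime_orbit[OF assms(1) period[OF that] no_fix[OF that]])
  have orb_closed: "f y \<in> orb x" if "y \<in> orb x" "x \<in> A" for x y
  proof -
    obtain i where "i < p" "y = (f ^^ i) x" using \<open>y \<in> orb x\<close> by (auto simp: orb_def)
    then have fy: "f y = (f ^^ Suc i) x" by simp
    show ?thesis
    proof (cases "Suc i < p")
      case True
      then show ?thesis unfolding orb_def fy by (intro image_eqI[of _ _ "Suc i"]) auto
    next
      case False
      then have "Suc i = p" using \<open>i < p\<close> by simp
      then have "f y = (f ^^ 0) x" using fy period[OF \<open>x \<in> A\<close>] by simp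
      then show ?thesis unfolding orb_def using p_pos by (intro image_eqI[of _ _ 0]) auto
    qed
  qed
  have orb_eq: "orb y = orb x" if "y \<in> orb x" "x \<in> A" for x y
  proof (rule card_subset_eq)
    show "finite (orb x)" by (simp add: orb_def)
    show "orb y \<subseteq> orb x"
    proof
      fix z assume "z \<in> orb y"
      then obtain i where "z = (f ^^ i) y" by (auto simp: orb_def)
      then show "z \<in> orb x" using that by (induction i arbitrary: z) (auto intro: orb_closed)
    qed
    have "y \<in> A" using that funpow_in by (auto simp: orb_def)
    then show "card (orb y) = card (orb x)" using card_orb that by simp
  qed
  have "A = \<Union> (orb ` A)"
    using funpow_in p_pos by (force simp: orb_def)
  moreover have "p dvd card (\<Union> (orb ` A))"
  proof (rule dvd_partition)
    show "finite (\<Union> (orb ` A))" by (simp add: orb_def assms(2))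
    show "\<forall>c\<in>orb ` A. p dvd card c" using card_orb by auto
    show "\<forall>c1\<in>orb ` A. \<forall>c2\<in>orb ` A. c1 \<noteq> c2 \<longrightarrow> c1 \<inter> c2 = {}"
      using orb_eq by blast
  qed
  ultimately show ?thesis by simp
qed

lemma odd_card_if_two_neq_zero:
  assumes "(2::'a::{field,finite}) \<noteq> 0"
  shows "odd (card (UNIV :: 'a set))"
proof -
  have "2 dvd card (UNIV - {0::'a})"
  proof (rule prime_dvd_card_if_fixpoint_free_periodic[where f = uminus])
    fix x :: 'a assume "x \<in> UNIV - {0}"
    moreover have "- x = x \<Longrightarrow> 2 * x = 0" by (metis add.right_inverse mult_2)
    ultimately show "- x \<noteq> x" using assms by auto
  next
    show "(uminus ^^ 2) x = x" for x :: 'a unfolding numeral_2_eq_2 by simp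
  qed auto
  moreover have "card (UNIV :: 'a set) > 0" by (simp add: finite_UNIV_card_ge_0)
  ultimately show ?thesis by (simp add: card_Diff_singleton)
qed

lemma not_three_dvd_card_if_three_neq_zero:
  assumes "(3::'a::{field,finite}) \<noteq> 0"
  shows "\<not> 3 dvd card (UNIV :: 'a set)"
proof
  let ?f = "\<lambda>(x::'a, y). (y, - x - y)"
  have "3 dvd card (UNIV - {(0::'a, 0::'a)})"
  proof (rule prime_dvd_card_if_fixpoint_free_periodic[where f = ?f])
    fix p assume p: "p \<in> UNIV - {(0::'a, 0::'a)}"
    obtain x y where xy: "p = (x, y)" by fastforce
    show "?f p \<noteq> p"
    proof
      assume "?f p = p"
      then have "y = x" "- x - y = y" using xy by auto
      then have "3 * x = 0" by (simp add: algebra_simps)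
      then show False using p xy \<open>y = x\<close> assms by simp
    qed
    show "(?f ^^ 3) p = p" unfolding xy numeral_3_eq_3 by simp
  next
    show "?f ` (UNIV - {(0, 0)}) \<subseteq> UNIV - {(0, 0)}" by auto
  qed auto
  moreover have "card (UNIV - {(0::'a, 0::'a)}) = card (UNIV :: 'a set) ^ 2 - 1"
    using card_cartesian_product[of "UNIV :: 'a set" "UNIV :: 'a set"]
    by (simp add: card_Diff_singleton power2_eq_square)
  moreover assume "3 dvd card (UNIV :: 'a set)"
  then have "3 dvd card (UNIV :: 'a set) ^ 2" by (simp add: power2_eq_square)
  moreover have "card (UNIV :: 'a set) ^ 2 \<ge> 1" by (simp add: Suc_leI finite_UNIV_card_ge_0)
  ultimately have "3 dvd card (UNIV :: 'a set) ^ 2 - (card (UNIV :: 'a set) ^ 2 - 1)"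
    using dvd_diff_nat by metis
  then show False using \<open>card (UNIV :: 'a set) ^ 2 \<ge> 1\<close> by simp
qed

lemma nine_mul_neq_one:
  fixes \<mu> :: "'a::{field,finite}"
  assumes "\<mu> \<noteq> 1"
    and "odd (card (UNIV :: 'a set)) \<and> card (UNIV :: 'a set) mod 3 \<noteq> 0 \<Longrightarrow> \<mu> \<noteq> 1/9"
  shows "9 * \<mu> \<noteq> 1"
proof
  assume nine: "9 * \<mu> = 1"
  have "(2::'a) \<noteq> 0"
  proof
    assume "(2::'a) = 0"
    moreover have "9 * \<mu> = \<mu> + 2 * (4 * \<mu>)" by (simp add: algebra_simps)
    ultimately show False using nine assms(1) by simp
  qed
  moreover have "(3::'a) \<noteq> 0"
  proof
    assume "(3::'a) = 0"
    moreover have "9 * \<mu> = 3 * (3 * \<mu>)" by (simp add: algebra_simps)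
    ultimately show False using nine by simp
  qed
  ultimately have "odd (card (UNIV :: 'a set)) \<and> \<not> 3 dvd card (UNIV :: 'a set)"
    by (simp add: odd_card_if_two_neq_zero not_three_dvd_card_if_three_neq_zero)
  then have "\<mu> \<noteq> 1/9" using assms(2) by (simp add: dvd_eq_mod_eq_0)
  moreover have "(9::'a) \<noteq> 0" using nine by auto
  with nine have "\<mu> = 1/9" by (simp add: eq_divide_eq mult.commute)
  ultimately show False by simp
qed

lemma smult4_smult4 [simp]: "smult4 c (smult4 d v) = smult4 (c * d) v"
  by (cases v) (simp add: smult4_def mult.assoc)

lemma smult4_one [simp]: "smult4 1 v = v"
  by (cases v) (simp add: smult4_def)

lemma dot4_smult4: "dot4 (smult4 c a) (smult4 d x) = c * d * dot4 a x"
  by (cases a; cases x) (simp add: smult4_def dot4_def algebra_simps)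

lemma mem_proj_self: "v \<in> proj v"
  unfolding proj_def by (metis (mono_tags, lifting) mem_Collect_eq one_neq_zero smult4_one)

lemma proj_smult4:
  assumes "k \<noteq> 0"
  shows "proj (smult4 k v) = proj v"
  unfolding proj_def
proof (intro set_eqI iffI; elim CollectE exE conjE)
  fix x c assume "x = smult4 c (smult4 k v)" "c \<noteq> 0"
  then show "x \<in> {smult4 c v |c. c \<noteq> 0}" using assms by auto
next
  fix x c assume "x = smult4 c v" "c \<noteq> 0"
  then have "x = smult4 (c / k) (smult4 k v)" using assms by simp
  moreover have "c / k \<noteq> 0" using \<open>c \<noteq> 0\<close> assms by simp
  ultimately show "x \<in> {smult4 c (smult4 k v) |c. c \<noteq> 0}" by blast
qed

lemma proj_eqD: "proj a = proj b \<Longrightarrow> \<exists>k. k \<noteq> 0 \<and> b = smult4 k a"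
  using mem_proj_self[of b] unfolding proj_def by auto

lemma incident_proj_iff: "incident (proj a) (proj x) \<longleftrightarrow> dot4 a x = 0"
proof
  assume "incident (proj a) (proj x)"
  then obtain c d where "c \<noteq> 0" "d \<noteq> 0" "dot4 (smult4 c a) (smult4 d x) = 0"
    unfolding incident_def proj_def by auto
  then show "dot4 a x = 0" by (simp add: dot4_smult4)
next
  assume "dot4 a x = 0"
  then show "incident (proj a) (proj x)" unfolding incident_def using mem_proj_self by blast
qed

lemma ell_eq: "ell \<mu> = {proj (b, a * \<mu>, b, a) | a b. (a, b) \<noteq> (0, 0)}"
  unfolding ell_def line_through_def by (simp add: smult4_def add4_def)

lemma ell_memI: "(a, b) \<noteq> (0, 0) \<Longrightarrow> proj (b, a * \<mu>, b, a) \<in> ell \<mu>"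
  unfolding ell_eq by blast

lemma proj_mem_PG3_points: "v \<noteq> (0, 0, 0, 0) \<Longrightarrow> proj v \<in> PG3_points"
  unfolding PG3_points_def by blast

lemma proj_mem_PG3_planes: "a \<noteq> (0, 0, 0, 0) \<Longrightarrow> proj a \<in> PG3_planes"
  unfolding PG3_planes_def by blast

lemma ell_subset_points_of_plane_iff:
  "ell \<mu> \<subseteq> points_of_plane (proj (a0, a1, a2, a3)) \<longleftrightarrow> a0 + a2 = 0 \<and> a1 * \<mu> + a3 = 0"
  (is "ell \<mu> \<subseteq> points_of_plane ?H \<longleftrightarrow> _")
proof
  assume ell_sub: "ell \<mu> \<subseteq> points_of_plane ?H"
  have "proj (0, 1 * \<mu>, 0, 1) \<in> points_of_plane ?H" "proj (1, 0 * \<mu>, 1, 0) \<in> points_of_plane ?H"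
    using ell_sub ell_memI[of 1 0 \<mu>] ell_memI[of 0 1 \<mu>] by auto
  then show "a0 + a2 = 0 \<and> a1 * \<mu> + a3 = 0"
    by (simp add: points_of_plane_def incident_proj_iff dot4_def)
next
  assume coeffs: "a0 + a2 = 0 \<and> a1 * \<mu> + a3 = 0"
  show "ell \<mu> \<subseteq> points_of_plane ?H"
  proof
    fix P assume "P \<in> ell \<mu>"
    then obtain a b where "(a, b) \<noteq> (0, 0)" and P: "P = proj (b, a * \<mu>, b, a)"
      unfolding ell_eq by blast
    have "dot4 (a0, a1, a2, a3) (b, a * \<mu>, b, a) = b * (a0 + a2) + a * (a1 * \<mu> + a3)"
      by (simp add: dot4_def algebra_simps)
    then have "incident ?H P" using coeffs P by (simp add: incident_proj_iff)
    moreover have "P \<in> PG3_points" using \<open>(a, b) \<noteq> (0, 0)\<close> P by (auto intro: proj_mem_PG3_points)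
    ultimately show "P \<in> points_of_plane ?H" by (simp add: points_of_plane_def)
  qed
qed

definition pencil_plane :: "'a::field \<Rightarrow> 'a \<Rightarrow> 'a vec4 set" where
  "pencil_plane \<mu> c = proj (1, c, -1, - (\<mu> * c))"

definition pencil_plane_inf :: "'a::field \<Rightarrow> 'a vec4 set" where
  "pencil_plane_inf \<mu> = proj (0, 1, 0, - \<mu>)"

lemma planes_through_ell:
  "{H \<in> PG3_planes. ell \<mu> \<subseteq> points_of_plane H} = range (pencil_plane \<mu>) \<union> {pencil_plane_inf \<mu>}"
proof (intro set_eqI iffI)
  fix H assume "H \<in> {H \<in> PG3_planes. ell \<mu> \<subseteq> points_of_plane H}"
  then obtain a0 a1 a2 a3 where H: "H = proj (a0, a1, a2, a3)" "(a0, a1, a2, a3) \<noteq> (0, 0, 0, 0)"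
    and "ell \<mu> \<subseteq> points_of_plane (proj (a0, a1, a2, a3))"
    unfolding PG3_planes_def by auto
  then have coeffs: "a2 = - a0" "a3 = - (a1 * \<mu>)"
    by (simp_all add: ell_subset_points_of_plane_iff eq_neg_iff_add_eq_0 add.commute)
  show "H \<in> range (pencil_plane \<mu>) \<union> {pencil_plane_inf \<mu>}"
  proof (cases "a0 = 0")
    case False
    then have "H = proj (smult4 (1 / a0) (a0, a1, a2, a3))" using H(1) by (simp add: proj_smult4)
    also have "\<dots> = pencil_plane \<mu> (a1 / a0)"
      using False by (simp add: pencil_plane_def smult4_def coeffs field_simps)
    finally show ?thesis by simp
  next
    case True
    then have "a1 \<noteq> 0" using H(2) coeffs by auto
    then have "H = proj (smult4 (1 / a1) (a0, a1, a2, a3))" using H(1) by (simp add: proj_smult4)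
    also have "\<dots> = pencil_plane_inf \<mu>"
      using True \<open>a1 \<noteq> 0\<close> by (simp add: pencil_plane_inf_def smult4_def coeffs)
    finally show ?thesis by simp
  qed
next
  fix H assume "H \<in> range (pencil_plane \<mu>) \<union> {pencil_plane_inf \<mu>}"
  moreover have "pencil_plane \<mu> c \<in> PG3_planes \<and> ell \<mu> \<subseteq> points_of_plane (pencil_plane \<mu> c)" for c
    unfolding pencil_plane_def by (simp add: proj_mem_PG3_planes ell_subset_points_of_plane_iff)
  moreover have "pencil_plane_inf \<mu> \<in> PG3_planes \<and> ell \<mu> \<subseteq> points_of_plane (pencil_plane_inf \<mu>)"
    unfolding pencil_plane_inf_def by (simp add: proj_mem_PG3_planes ell_subset_points_of_plane_iff)
  ultimately show "H \<in> {H \<in> PG3_planes. ell \<mu> \<subseteq> points_of_plane H}" by blast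
qed

lemma inj_pencil_plane: "inj (pencil_plane \<mu>)"
  by (rule injI) (auto simp: pencil_plane_def smult4_def dest: proj_eqD)

lemma pencil_plane_neq_inf: "pencil_plane \<mu> c \<noteq> pencil_plane_inf \<mu>"
  by (auto simp: pencil_plane_def pencil_plane_inf_def smult4_def dest: proj_eqD)

lemma card_twisted_cubic_on_plane:
  fixes a :: "'a::{field,finite} vec4"
  shows "card {P \<in> twisted_cubic. incident (proj a) P} =
    card {t. dot4 a (t^3, t^2, t, 1) = 0} + (if dot4 a (1, 0, 0, 0) = 0 then 1 else 0)"
proof -
  let ?pt = "\<lambda>t::'a. proj (t^3, t^2, t, 1)"
  have "inj ?pt"
    by (rule injI) (auto simp: smult4_def dest: proj_eqD)
  moreover have "?pt t \<noteq> proj (1, 0, 0, 0)" for t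
    by (auto simp: smult4_def dest!: proj_eqD)
  moreover have "{P \<in> twisted_cubic. incident (proj a) P} = ?pt ` {t. dot4 a (t^3, t^2, t, 1) = 0}
      \<union> (if dot4 a (1, 0, 0, 0) = 0 then {proj (1, 0, 0, 0)} else {})"
    unfolding twisted_cubic_def by (auto simp: incident_proj_iff)
  ultimately show ?thesis
    by (auto simp: card_image inj_on_subset card_insert_if)
qed

lemma card_twisted_cubic_on_pencil_plane:
  "card {P \<in> twisted_cubic. incident (pencil_plane \<mu> c) P} = card {t::'a::{field,finite}. t^3 + c * t^2 - t - \<mu> * c = 0}"
  unfolding pencil_plane_def card_twisted_cubic_on_plane by (simp add: dot4_def algebra_simps)

lemma card_twisted_cubic_on_pencil_plane_inf:
  "card {P \<in> twisted_cubic. incident (pencil_plane_inf \<mu>) P} = card {t::'a::{field,finite}. t^2 = \<mu>} + 1"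
  unfolding pencil_plane_inf_def card_twisted_cubic_on_plane by (simp add: dot4_def)

lemma nine_mul_eq_one_if_Gamma_plane_contains_ell:
  fixes \<mu> :: "'a::field"
  assumes "H \<in> Gamma_planes" "ell \<mu> \<subseteq> points_of_plane H"
  shows "9 * \<mu> = 1"
  using assms(1) unfolding Gamma_planes_def
proof (elim UnE CollectE exE conjE)
  fix t assume "H = proj (1, -3 * t, 3 * t^2, - (t^3))"
  then have "1 + 3 * t^2 = 0" and "- 3 * t * \<mu> - t^3 = 0"
    using assms(2) by (simp_all add: ell_subset_points_of_plane_iff)
  moreover have "t * (t^2 + 3 * \<mu>) = - (- 3 * t * \<mu> - t^3)"
    by (simp add: algebra_simps power2_eq_square power3_eq_cube)
  moreover have "t \<noteq> 0" using \<open>1 + 3 * t^2 = 0\<close> by auto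
  ultimately have "t^2 = - (3 * \<mu>)" by (simp add: eq_neg_iff_add_eq_0)
  then have "1 - 9 * \<mu> = 0" using \<open>1 + 3 * t^2 = 0\<close> by simp
  then show "9 * \<mu> = 1" by simp
next
  assume "H \<in> {proj (0, 0, 0, 1)}"
  then show "9 * \<mu> = 1" using assms(2) by (simp add: ell_subset_points_of_plane_iff)
qed

lemma N1_tilde_altdef: "N1_tilde \<mu> = card {c. card {t. t^3 + c * t^2 - t - \<mu> * c = 0} = 1}"
proof -
  have "{0, 1} \<subseteq> {t::'a. t^3 + 0 * t^2 - t - \<mu> * 0 = 0}" by auto
  then have "card {t::'a. t^3 + 0 * t^2 - t - \<mu> * 0 = 0} \<noteq> 1"
    using card_mono[of "{t::'a. t^3 + 0 * t^2 - t - \<mu> * 0 = 0}" "{0, 1}"] by fastforce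
  then have "{c. c \<noteq> 0 \<and> card {t. t^3 + c * t^2 - t - \<mu> * c = 0} = 1} =
      {c. card {t. t^3 + c * t^2 - t - \<mu> * c = 0} = 1}" by auto
  then show ?thesis unfolding N1_tilde_def by simp
qed

theorem lemma5p4:
  fixes \<mu> :: "'a::{field,finite}"
  assumes "card (UNIV :: 'a set) \<ge> 5"
    and "\<mu> \<noteq> 0" and "\<mu> \<noteq> 1"
    and "odd (card (UNIV :: 'a set)) \<and> card (UNIV :: 'a set) mod 3 \<noteq> 0 \<Longrightarrow> \<mu> \<noteq> 1/9"
  shows "card {H \<in> PG3_planes. one_C_bar_plane H \<and> ell \<mu> \<subseteq> points_of_plane H} =
    (if (\<exists>x. \<mu> = x^2) then N1_tilde \<mu> else N1_tilde \<mu> + 1)"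
proof -
  let ?n = "\<lambda>H. card {P \<in> twisted_cubic. incident H P}"
  let ?C = "{c. ?n (pencil_plane \<mu> c) = 1}"
  have "H \<notin> Gamma_planes" if "ell \<mu> \<subseteq> points_of_plane H" for H
    using nine_mul_eq_one_if_Gamma_plane_contains_ell[OF _ that] nine_mul_neq_one[OF assms(3,4)] by blast
  then have "{H \<in> PG3_planes. one_C_bar_plane H \<and> ell \<mu> \<subseteq> points_of_plane H} =
      {H \<in> {H \<in> PG3_planes. ell \<mu> \<subseteq> points_of_plane H}. ?n H = 1}"
    unfolding one_C_bar_plane_def by auto
  also have "\<dots> = pencil_plane \<mu> ` ?C \<union>
      (if ?n (pencil_plane_inf \<mu>) = 1 then {pencil_plane_inf \<mu>} else {})"
    unfolding planes_through_ell by auto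
  also have "card \<dots> = card ?C + (if ?n (pencil_plane_inf \<mu>) = 1 then 1 else 0)"
    using pencil_plane_neq_inf[of \<mu>]
    by (subst card_Un_disjoint) (auto simp: card_image inj_on_subset[OF inj_pencil_plane])
  also have "?n (pencil_plane_inf \<mu>) = 1 \<longleftrightarrow> \<not> (\<exists>x. \<mu> = x^2)"
    by (auto simp: card_twisted_cubic_on_pencil_plane_inf)
  finally show ?thesis
    by (simp add: card_twisted_cubic_on_pencil_plane N1_tilde_altdef)
qed

end
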